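(* Let $n,m,k$ be positive integers with $k\mid n$, let $p\in(0,1/2)$, and let $\mu_1,\dots,\mu_k\in\{0,1\}^m$ be fixed vectors satisfying the non-degeneracy assumption. Let $V=V_1\sqcup\dots\sqcup V_k$ with $|V_i|=n/k$, where every person $v\in V_i$ answers question $s\in\{1,\dots,m\}$ with $v(s)=\mu_i(s)$ with probability $1-p$ and $v(s)=1-\mu_i(s)$ with probability $p$, independently across persons and questions. Let $\mathcal P$ be the set of cuts $\{A_s^0,A_s^1\}$, $s=1,\dots,m$, with $A_s^y=\{v\in V: v(s)=y\}$. Let $a=\alpha n$ be the agreement parameter and suppose $p<a/n$. Then the probability that there is a $\mathcal P$-tangle which is not equal to any of the mindsets $\mu_1,\dots,\mu_k$ is at most $k\,m\,\exp\bigl(-2(\alpha-p)^2n/k\bigr)$.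
   Context: An orientation of $\mathcal P$ chooses one side of every cut; it is identified with $\tau\in\{0,1\}^m$ by choosing the side $A_s^{\tau(s)}$ for question $s$. An orientation $O$ is a $\mathcal P$-tangle if for all (not necessarily distinct) chosen sides $A,B,C\in O$ we have $|A\cap B\cap C|\ge a$. Non-degeneracy assumption: whenever $\tau\in\{0,1\}^m$ has the property that for all $x,y,z\in\{1,\dots,m\}$ there exists a mindset $\mu_i$ with $\tau(x)=\mu_i(x)$, $\tau(y)=\mu_i(y)$ and $\tau(z)=\mu_i(z)$, then $\tau=\mu_j$ for some $j$. The probability is over the random answers. *)

theory Defs
  imports "HOL-Probability.Probability"
begin

text \<open>Persons are pairs (i,j): group i < k, index j < n div k (so |V_i| = n/k).
  Questions are s < m. Booleans encode {0,1} (True = 1).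
  A mindset is mu i :: nat => bool for i < k.\<close>

definition persons :: "nat \<Rightarrow> nat \<Rightarrow> (nat \<times> nat) set" where
  "persons n k = {0..<k} \<times> {0..<n div k}"

text \<open>Random flips: flip (v,s) = True with probability p, independently.
  Person v = (i,j) answers question s with mu i s, unless the flip occurs.\<close>

definition flip_pmf :: "nat \<Rightarrow> nat \<Rightarrow> nat \<Rightarrow> real \<Rightarrow> ((nat \<times> nat) \<times> nat \<Rightarrow> bool) pmf" where
  "flip_pmf n k m p = Pi_pmf (persons n k \<times> {0..<m}) False (\<lambda>_. bernoulli_pmf p)"

definition answer :: "(nat \<Rightarrow> nat \<Rightarrow> bool) \<Rightarrow> ((nat \<times> nat) \<times> nat \<Rightarrow> bool) \<Rightarrow> nat \<times> nat \<Rightarrow> nat \<Rightarrow> bool" where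
  "answer mu \<omega> v s = (if \<omega> (v, s) then \<not> mu (fst v) s else mu (fst v) s)"

definition side :: "nat \<Rightarrow> nat \<Rightarrow> (nat \<Rightarrow> nat \<Rightarrow> bool) \<Rightarrow> ((nat \<times> nat) \<times> nat \<Rightarrow> bool) \<Rightarrow> nat \<Rightarrow> bool \<Rightarrow> (nat \<times> nat) set" where
  "side n k mu \<omega> s y = {v \<in> persons n k. answer mu \<omega> v s = y}"

definition is_tangle :: "nat \<Rightarrow> nat \<Rightarrow> nat \<Rightarrow> (nat \<Rightarrow> nat \<Rightarrow> bool) \<Rightarrow> ((nat \<times> nat) \<times> nat \<Rightarrow> bool) \<Rightarrow> real \<Rightarrow> (nat \<Rightarrow> bool) \<Rightarrow> bool" where
  "is_tangle n k m mu \<omega> a tau =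
     (\<forall>x<m. \<forall>y<m. \<forall>z<m.
        real (card (side n k mu \<omega> x (tau x) \<inter> side n k mu \<omega> y (tau y) \<inter> side n k mu \<omega> z (tau z))) \<ge> a)"

definition non_degenerate :: "nat \<Rightarrow> nat \<Rightarrow> (nat \<Rightarrow> nat \<Rightarrow> bool) \<Rightarrow> bool" where
  "non_degenerate k m mu =
     (\<forall>tau :: nat \<Rightarrow> bool.
        (\<forall>x<m. \<forall>y<m. \<forall>z<m. \<exists>i<k. tau x = mu i x \<and> tau y = mu i y \<and> tau z = mu i z)
        \<longrightarrow> (\<exists>j<k. \<forall>s<m. tau s = mu j s))"

end

theory Submission
  imports Defs
begin

text \<open>A non-mindset tangle \<open>\<tau>\<close> must, by non-degeneracy, disagree with every mindset \<open>\<mu>\<^sub>i\<close>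
  somewhere on a fixed triple of questions \<open>x, y, z\<close>. A person of group \<open>i\<close> lying in all three
  chosen sides therefore agrees with \<open>\<tau>\<close> at a question where \<open>\<mu>\<^sub>i\<close> does not, i.e. has a flipped
  answer there. The triple intersection has at least \<open>\<alpha> n\<close> elements, so by averaging over
  the \<open>k\<close> groups some group \<open>i\<close> has at least \<open>\<alpha> n/k\<close> flips at a single question \<open>s\<close>.
  The number of such flips is binomial with parameters \<open>n/k\<close> and \<open>p\<close>, so Hoeffding's
  inequality and a union bound over the \<open>k m\<close> pairs \<open>(i, s)\<close> give the claim.\<close>

lemma (in finite_measure) finite_measure_UN_le_card_mult:
  assumes "finite I" "\<And>i. i \<in> I \<Longrightarrow> E i \<in> sets M" "\<And>i. i \<in> I \<Longrightarrow> measure M (E i) \<le> b"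
  shows "measure M (\<Union>i\<in>I. E i) \<le> real (card I) * b"
proof -
  have "measure M (\<Union>i\<in>I. E i) \<le> (\<Sum>i\<in>I. measure M (E i))"
    using assms(1,2) by (intro finite_measure_subadditive_finite) auto
  also have "\<dots> \<le> real (card I) * b"
    using assms(3) by (rule sum_bounded_above)
  finally show ?thesis .
qed

definition group_flips :: "nat \<Rightarrow> nat \<Rightarrow> nat \<Rightarrow> ((nat \<times> nat) \<times> nat \<Rightarrow> bool) \<Rightarrow> nat" where
  "group_flips N i s \<omega> = card {j \<in> {..<N}. \<omega> ((i, j), s)}"

lemma map_pmf_card_true_Pi_pmf_bernoulli:
  assumes "finite A" "B \<subseteq> A" "p \<in> {0..1}"
  shows "map_pmf (\<lambda>f. card {x \<in> B. f x}) (Pi_pmf A dflt (\<lambda>_. bernoulli_pmf p))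
         = binomial_pmf (card B) p"
proof -
  have "finite B" using assms(1,2) by (rule finite_subset[rotated])
  then have "binomial_pmf (card B) p
      = map_pmf (\<lambda>f. card {x \<in> B. f x}) (Pi_pmf B dflt (\<lambda>_. bernoulli_pmf p))"
    using binomial_pmf_altdef'[OF _ refl assms(3)] by blast
  also have "Pi_pmf B dflt (\<lambda>_. bernoulli_pmf p)
      = map_pmf (\<lambda>f x. if x \<in> B then f x else dflt) (Pi_pmf A dflt (\<lambda>_. bernoulli_pmf p))"
    using assms(1,2) by (rule Pi_pmf_subset)
  also have "map_pmf (\<lambda>f. card {x \<in> B. f x}) \<dots>
      = map_pmf (\<lambda>f. card {x \<in> B. f x}) (Pi_pmf A dflt (\<lambda>_. bernoulli_pmf p))"
    unfolding map_pmf_comp by (intro map_pmf_cong refl arg_cong[where f = card]) auto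
  finally show ?thesis ..
qed

lemma map_pmf_group_flips:
  assumes "i < k" "s < m" "p \<in> {0..1}"
  shows "map_pmf (group_flips (n div k) i s) (flip_pmf n k m p) = binomial_pmf (n div k) p"
proof -
  let ?cell = "\<lambda>j. ((i, j), s)"
  have inj: "inj_on ?cell X" for X :: "nat set" by (auto simp: inj_on_def)
  have flips: "group_flips (n div k) i s = (\<lambda>\<omega>. card {x \<in> ?cell ` {..<n div k}. \<omega> x})"
  proof
    fix \<omega> :: "(nat \<times> nat) \<times> nat \<Rightarrow> bool"
    have "{x \<in> ?cell ` {..<n div k}. \<omega> x} = ?cell ` {j \<in> {..<n div k}. \<omega> ((i, j), s)}"
      by auto
    then show "group_flips (n div k) i s \<omega> = card {x \<in> ?cell ` {..<n div k}. \<omega> x}"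
      by (simp add: group_flips_def card_image[OF inj])
  qed
  have "?cell ` {..<n div k} \<subseteq> persons n k \<times> {0..<m}"
    using assms(1,2) by (auto simp: persons_def)
  from map_pmf_card_true_Pi_pmf_bernoulli[OF _ this assms(3)]
  show ?thesis
    unfolding flips flip_pmf_def by (simp add: persons_def card_image[OF inj])
qed

lemma prob_group_flips_ge:
  assumes "i < k" "s < m" "0 \<le> p" "p \<le> 1" "p \<le> \<alpha>" "n div k > 0"
  shows "measure_pmf.prob (flip_pmf n k m p) {\<omega>. \<alpha> * real (n div k) \<le> real (group_flips (n div k) i s \<omega>)}
         \<le> exp (- 2 * real (n div k) * (\<alpha> - p)\<^sup>2)"
proof -
  let ?N = "n div k"
  interpret binomial_distribution ?N p
    using assms(3,4) by unfold_locales simp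
  have "measure_pmf.prob (flip_pmf n k m p) {\<omega>. \<alpha> * real ?N \<le> real (group_flips ?N i s \<omega>)}
      = measure_pmf.prob (map_pmf (group_flips ?N i s) (flip_pmf n k m p)) {x. \<alpha> * real ?N \<le> real x}"
    by (simp add: vimage_def)
  also have "map_pmf (group_flips ?N i s) (flip_pmf n k m p) = binomial_pmf ?N p"
    using assms(1-4) by (intro map_pmf_group_flips) auto
  also have "{x. \<alpha> * real ?N \<le> real x} = {x. p + (\<alpha> - p) \<le> real x / real ?N}"
    using assms(6) by (auto simp: field_simps)
  also have "measure_pmf.prob (binomial_pmf ?N p) \<dots> \<le> exp (- 2 * real ?N * (\<alpha> - p)\<^sup>2)"
    using prob_ge'[of "\<alpha> - p"] assms(5,6) by simp
  finally show ?thesis .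
qed

lemma non_mindset_disagrees_on_triple:
  assumes "non_degenerate k m mu" "\<forall>i<k. \<exists>s<m. tau s \<noteq> mu i s"
  obtains x y z where "x < m" "y < m" "z < m"
    "\<forall>i<k. tau x \<noteq> mu i x \<or> tau y \<noteq> mu i y \<or> tau z \<noteq> mu i z"
proof -
  have "\<not> (\<exists>j<k. \<forall>s<m. tau s = mu j s)"
    using assms(2) by blast
  then have "\<not> (\<forall>x<m. \<forall>y<m. \<forall>z<m. \<exists>i<k. tau x = mu i x \<and> tau y = mu i y \<and> tau z = mu i z)"
    using assms(1) unfolding non_degenerate_def by blast
  then show thesis
    using that by blast
qed

lemma card_agreeing_eq_sum_group_flips:
  assumes "\<And>i. i < k \<Longrightarrow> tau (sc i) \<noteq> mu i (sc i)"
  shows "card {v \<in> persons n k. answer mu \<omega> v (sc (fst v)) = tau (sc (fst v))}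
         = (\<Sum>i<k. group_flips (n div k) i (sc i) \<omega>)"
proof -
  have "{v \<in> persons n k. answer mu \<omega> v (sc (fst v)) = tau (sc (fst v))}
      = (SIGMA i:{..<k}. {j \<in> {..<n div k}. \<omega> ((i, j), sc i)})"
    using assms by (auto simp: persons_def answer_def)
  then show ?thesis by (simp add: group_flips_def)
qed

lemma non_mindset_tangle_imp_many_group_flips:
  assumes "non_degenerate k m mu" "k > 0" "k dvd n"
    and tangle: "is_tangle n k m mu \<omega> (\<alpha> * real n) tau"
    and non_mindset: "\<forall>i<k. \<exists>s<m. tau s \<noteq> mu i s"
  shows "\<exists>i<k. \<exists>s<m. \<alpha> * real (n div k) \<le> real (group_flips (n div k) i s \<omega>)"
proof -
  obtain x y z where xyz: "x < m" "y < m" "z < m"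
    and disagree: "\<forall>i<k. tau x \<noteq> mu i x \<or> tau y \<noteq> mu i y \<or> tau z \<noteq> mu i z"
    using non_mindset_disagrees_on_triple[OF assms(1) non_mindset] .
  define sc where "sc i = (if tau x \<noteq> mu i x then x else if tau y \<noteq> mu i y then y else z)" for i
  have sc_disagrees: "tau (sc i) \<noteq> mu i (sc i)" if "i < k" for i
    using disagree that by (auto simp: sc_def)
  have sc_less: "sc i < m" for i
    using xyz by (simp add: sc_def)
  have sc_cases: "sc i = x \<or> sc i = y \<or> sc i = z" for i
    by (simp add: sc_def)
  let ?T = "side n k mu \<omega> x (tau x) \<inter> side n k mu \<omega> y (tau y) \<inter> side n k mu \<omega> z (tau z)"
  have "?T \<subseteq> {v \<in> persons n k. answer mu \<omega> v (sc (fst v)) = tau (sc (fst v))}"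
  proof
    fix v assume "v \<in> ?T"
    with sc_cases[of "fst v"] show "v \<in> {v \<in> persons n k. answer mu \<omega> v (sc (fst v)) = tau (sc (fst v))}"
      unfolding side_def by blast
  qed
  then have "card ?T \<le> card {v \<in> persons n k. answer mu \<omega> v (sc (fst v)) = tau (sc (fst v))}"
    by (rule card_mono[rotated]) (simp add: persons_def)
  also have "\<dots> = (\<Sum>i<k. group_flips (n div k) i (sc i) \<omega>)"
    using sc_disagrees by (rule card_agreeing_eq_sum_group_flips)
  finally have "real (card ?T) \<le> (\<Sum>i<k. real (group_flips (n div k) i (sc i) \<omega>))"
    by (simp flip: of_nat_sum)
  moreover have "\<alpha> * real n \<le> real (card ?T)"
    using tangle xyz unfolding is_tangle_def by blast
  ultimately have sum_ge: "\<alpha> * real n \<le> (\<Sum>i<k. real (group_flips (n div k) i (sc i) \<omega>))"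
    by linarith
  have "\<exists>i<k. \<alpha> * real (n div k) \<le> real (group_flips (n div k) i (sc i) \<omega>)"
  proof (rule ccontr)
    assume "\<not> ?thesis"
    then have "(\<Sum>i<k. real (group_flips (n div k) i (sc i) \<omega>)) < real (card {..<k}) * (\<alpha> * real (n div k))"
      using assms(2) by (intro sum_bounded_above_strict) auto
    also have "\<dots> = \<alpha> * real n"
      using assms(2,3) by (simp add: real_of_nat_div)
    finally show False
      using sum_ge by linarith
  qed
  then show ?thesis
    using sc_less by blast
qed

theorem lemma2:
  fixes n m k :: nat and p \<alpha> :: real and mu :: "nat \<Rightarrow> nat \<Rightarrow> bool"
  assumes "n > 0" "m > 0" "k > 0" "k dvd n"
    and "0 < p" "p < 1/2"
    and "non_degenerate k m mu"
    and "p < (\<alpha> * real n) / real n"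
  shows "measure_pmf.prob (flip_pmf n k m p)
           {\<omega>. \<exists>tau. is_tangle n k m mu \<omega> (\<alpha> * real n) tau \<and> (\<forall>i<k. \<exists>s<m. tau s \<noteq> mu i s)}
         \<le> real k * real m * exp (- 2 * (\<alpha> - p)^2 * real n / real k)"
proof -
  let ?N = "n div k"
  let ?P = "measure_pmf.prob (flip_pmf n k m p)"
  let ?bad = "{\<omega>. \<exists>tau. is_tangle n k m mu \<omega> (\<alpha> * real n) tau \<and> (\<forall>i<k. \<exists>s<m. tau s \<noteq> mu i s)}"
  define E where "E is = {\<omega>. \<alpha> * real ?N \<le> real (group_flips ?N (fst is) (snd is) \<omega>)}" for "is"
  have "p < \<alpha>"
    using assms(1,8) by simp
  have "?N > 0"
    using assms(1,4) by (metis dvd_div_eq_0_iff gr0I)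
  have "?bad \<subseteq> (\<Union>is\<in>{..<k} \<times> {..<m}. E is)"
    using non_mindset_tangle_imp_many_group_flips[OF assms(7,3,4)] by (force simp: E_def)
  then have "?P ?bad \<le> ?P (\<Union>is\<in>{..<k} \<times> {..<m}. E is)"
    by (rule measure_pmf.finite_measure_mono) simp
  also have "\<dots> \<le> real (card ({..<k} \<times> {..<m})) * exp (- 2 * real ?N * (\<alpha> - p)\<^sup>2)"
    using prob_group_flips_ge assms(5,6) \<open>p < \<alpha>\<close> \<open>?N > 0\<close>
    by (intro measure_pmf.finite_measure_UN_le_card_mult) (auto simp: E_def)
  also have "\<dots> = real k * real m * exp (- 2 * (\<alpha> - p)^2 * real n / real k)"
    using assms(4) by (simp add: real_of_nat_div)
  finally show ?thesis .
qed

end
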